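(* Let $n\ge2$ and let $\mathsf r$ be a cyclic factorization of $\lambda_n$. Then there exists $\mathsf u\in\mathcal S_n$ such that $\mathsf r=\mathsf r^{\mathsf u}$.
   Context: $\widetilde S_n$ is the group, under composition $(vw)(k)=v(w(k))$, of bijections $w:\mathbb Z\to\mathbb Z$ with $w(i+n)=w(i)+n$ and $\sum_{i=1}^n w(i)=\binom{n+1}2$. For $i\not\equiv j\pmod n$, $(\!(i,j)\!)$ swaps $i+kn$ and $j+kn$ for all $k$; $(\!(i,j)\!)=(\!(j,i)\!)=(\!(i+kn,j+kn)\!)$; $s_i=(\!(i,i+1)\!)$, $i\in\{0,\dots,n-1\}$. "$i\bmod n$" is the representative in $\{1,\dots,n\}$. $\lambda_n(k)=k+n$ for $k\not\equiv0\pmod n$, $\lambda_n(k)=k-n(n-1)$ for $k\equiv0\pmod n$; its reflection length is $2n-2$; $\textsc{fact}(\lambda_n)$ is the set of sequences of $2n-2$ reflections with product $\lambda_n$. Such $[r_1,\dots,r_{2n-2}]$ is tree-like if one can write $r_i=(\!(a_{i-1},b_i)\!)$ with integers $a_{i-1}<b_i$ and $a_i\equiv b_i\pmod n$ ($1\le i\le 2n-3$). For $k\in[n]$, $N_{\mathsf r}(k)$ is the list, in increasing order of $i$, of $b_i\bmod n$ over all $i$ with $a_{i-1}\equiv k\pmod n$. A tree-like $\mathsf r$ is cyclic if (i) $N_{\mathsf r}(n)$ is strictly increasing and (ii) for each $1\le k<n$, writing $N_{\mathsf r}(k)=[c_1,\dots,c_\ell]$, there is $1\le j\le \ell$ with $c_j<\dots<c_{\ell-1}<k<c_1<\dots<c_{j-1}$.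 $\bm\lambda_n$ is the word $[s_0,\dots,s_{n-1}]$ repeated $n-1$ times with $j$-th letter $\sigma_j=s_{(j-1)\bmod n}$ (index in $\{0,\dots,n-1\}$). A subword is $\mathsf u=[u_1,\dots,u_{n(n-1)}]$ with $u_j\in\{\sigma_j,e\}$; $j$ is a skip if $u_j=e$. $u_{(j)}=u_1\cdots u_j$, $u_{(0)}=e$. $\mathcal S_n$ is the set of subwords with exactly $2n-2$ skips and product $e$. $\textsc{inv}(\mathsf u)=[t_1,\dots,t_{n(n-1)}]$, $t_j=u_{(j-1)}\sigma_ju_{(j-1)}^{-1}$; $\mathsf r^{\mathsf u}$ is the subsequence of the $t_j$ at skips, in increasing order. *)

theory Defs
  imports Main
begin

text \<open>Affine permutations are represented as functions int => int; product is
  composition, (v w)(k) = v (w k).\<close>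

definition affine_perm :: "nat \<Rightarrow> (int \<Rightarrow> int) \<Rightarrow> bool" where
  "affine_perm n w \<longleftrightarrow> bij w \<and> (\<forall>i. w (i + int n) = w i + int n)
     \<and> (\<Sum>i=1..int n. w i) = int n * (int n + 1) div 2"

text \<open>The reflection ((i,j)) (meant for i, j not congruent mod n): swaps i+kn and j+kn.\<close>
definition refl_aff :: "nat \<Rightarrow> int \<Rightarrow> int \<Rightarrow> int \<Rightarrow> int" where
  "refl_aff n i j k =
     (if k mod int n = i mod int n then k + (j - i)
      else if k mod int n = j mod int n then k + (i - j) else k)"

definition reflections :: "nat \<Rightarrow> (int \<Rightarrow> int) set" where
  "reflections n = {refl_aff n i j | i j. i mod int n \<noteq> j mod int n}"

definition simple_refl :: "nat \<Rightarrow> nat \<Rightarrow> int \<Rightarrow> int" where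
  "simple_refl n i = refl_aff n (int i) (int i + 1)"

definition lambda_aff :: "nat \<Rightarrow> int \<Rightarrow> int" where
  "lambda_aff n k = (if k mod int n \<noteq> 0 then k + int n else k - int n * (int n - 1))"

definition prod_perms :: "(int \<Rightarrow> int) list \<Rightarrow> int \<Rightarrow> int" where
  "prod_perms ws = foldr (\<circ>) ws id"

definition fact_lambda :: "nat \<Rightarrow> (int \<Rightarrow> int) list set" where
  "fact_lambda n = {rs. length rs = 2 * n - 2 \<and> set rs \<subseteq> reflections n
                        \<and> prod_perms rs = lambda_aff n}"

definition modn :: "nat \<Rightarrow> int \<Rightarrow> int" where
  "modn n k = (if k mod int n = 0 then int n else k mod int n)"

text \<open>Tree-like witness: r_i = ((a_{i-1}, b_i)) for 1 <= i <= 2n-2 with a_{i-1} < b_i,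
  and a_i == b_i (mod n) for 1 <= i <= 2n-3.  List index i-1 holds r_i.\<close>
definition tree_like_wit :: "nat \<Rightarrow> (int \<Rightarrow> int) list \<Rightarrow> (nat \<Rightarrow> int) \<Rightarrow> (nat \<Rightarrow> int) \<Rightarrow> bool" where
  "tree_like_wit n rs a b \<longleftrightarrow> length rs = 2 * n - 2 \<and>
     (\<forall>i\<in>{1..2*n-2}. a (i-1) mod int n \<noteq> b i mod int n \<and>
          rs ! (i-1) = refl_aff n (a (i-1)) (b i) \<and> a (i-1) < b i) \<and>
     (\<forall>i\<in>{1..2*n-3}. a i mod int n = b i mod int n)"

definition tree_like :: "nat \<Rightarrow> (int \<Rightarrow> int) list \<Rightarrow> bool" where
  "tree_like n rs \<longleftrightarrow> (\<exists>a b. tree_like_wit n rs a b)"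

definition nbr_list :: "nat \<Rightarrow> (nat \<Rightarrow> int) \<Rightarrow> (nat \<Rightarrow> int) \<Rightarrow> int \<Rightarrow> int list" where
  "nbr_list n a b k = map (\<lambda>i. modn n (b i)) (filter (\<lambda>i. modn n (a (i-1)) = k) [1..<2*n-1])"

text \<open>Condition (ii): N = [c_1..c_l] and some 1 <= j <= l with
  c_j < ... < c_{l-1} < k < c_1 < ... < c_{j-1}.\<close>
definition cyc_cond :: "int \<Rightarrow> int list \<Rightarrow> bool" where
  "cyc_cond k cs \<longleftrightarrow> (\<exists>j\<in>{1..length cs}.
     sorted_wrt (<) (drop (j-1) (butlast cs) @ [k] @ take (j-1) cs))"

definition cyclic_fact :: "nat \<Rightarrow> (int \<Rightarrow> int) list \<Rightarrow> bool" where
  "cyclic_fact n rs \<longleftrightarrow> (\<exists>a b. tree_like_wit n rs a b \<and>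
     sorted_wrt (<) (nbr_list n a b (int n)) \<and>
     (\<forall>k\<in>{1..<int n}. cyc_cond k (nbr_list n a b k)))"

text \<open>The word lambda_n: sigma_j = s_{(j-1) mod n}, j = 1..n(n-1).\<close>
definition sigma :: "nat \<Rightarrow> nat \<Rightarrow> int \<Rightarrow> int" where
  "sigma n j = simple_refl n ((j - 1) mod n)"

text \<open>Subwords: list u with u!(j-1) = u_j in {sigma_j, e}.\<close>
definition skips :: "nat \<Rightarrow> (int \<Rightarrow> int) list \<Rightarrow> nat list" where
  "skips n u = filter (\<lambda>j. u ! (j-1) = id) [1..<n*(n-1)+1]"

definition subwords_S :: "nat \<Rightarrow> (int \<Rightarrow> int) list set" where
  "subwords_S n = {u. length u = n * (n - 1) \<and>
       (\<forall>j\<in>{1..n*(n-1)}. u ! (j-1) = sigma n j \<or> u ! (j-1) = id) \<and>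
       length (skips n u) = 2 * n - 2 \<and> prod_perms u = id}"

definition prefix_prod :: "(int \<Rightarrow> int) list \<Rightarrow> nat \<Rightarrow> int \<Rightarrow> int" where
  "prefix_prod u j = prod_perms (take j u)"

definition inv_t :: "nat \<Rightarrow> (int \<Rightarrow> int) list \<Rightarrow> nat \<Rightarrow> int \<Rightarrow> int" where
  "inv_t n u j = prefix_prod u (j-1) \<circ> sigma n j \<circ> inv (prefix_prod u (j-1))"

definition r_of :: "nat \<Rightarrow> (int \<Rightarrow> int) list \<Rightarrow> (int \<Rightarrow> int) list" where
  "r_of n u = map (inv_t n u) (skips n u)"

end

theory Submission
  imports Defs
begin

text \<open>Write the factors as \<open>r_i = ((x_(i-1), x_i))\<close> with \<open>x_0 < x_1 < \<dots> < x_(2n-2)\<close> and let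
  \<open>P_t = r_1 \<cdots> r_t\<close>. Then \<open>P_(p-1) r_p P_(p-1)\<inverse> = ((x_0, y_p))\<close> with \<open>y_p = P_(p-1) (x_p)\<close>.
  Because the product is \<open>\<lambda>\<^sub>n\<close>, the path \<open>x\<close> starts and ends in the class of \<open>0\<close>, and by
  condition (ii) it visits every residue class mod \<open>n\<close>; each step \<open>p\<close> either enters the class of \<open>x_p\<close> for the first time (then
  \<open>y_p = x_p\<close>) or leaves the class of \<open>x_(p-1)\<close> for the last time (then \<open>y_p = x_(p-1) + n\<close>),
  by counting, exactly one of the two. The cyclicity conditions on the lists \<open>N_r(k)\<close> are what
  makes \<open>p \<mapsto> y_p\<close> strictly increasing, and \<open>0 < y_p - x_0 < n\<^sup>2\<close> is not divisible by \<open>n\<close>.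

  On the other side, the prefixes \<open>W_j = \<sigma>_1 \<cdots> \<sigma>_j\<close> of the word for \<open>\<lambda>\<^sub>n\<close> have the inversions
  \<open>W_(j-1) \<sigma>_j W_(j-1)\<inverse> = ((0, \<zeta>_j))\<close>, where \<open>\<zeta>_1 < \<zeta>_2 < \<dots>\<close> enumerates the positive integers
  not divisible by \<open>n\<close>. So \<open>y_p - x_0 = \<zeta>_(j_p)\<close> with \<open>j_1 < \<dots> < j_(2n-2)\<close>, and \<open>u\<close> skips exactly the
  letters at these positions: by induction on \<open>j\<close>, \<open>W_j = P_c u_(j)\<close> where \<open>c\<close> is the number of skips
  up to \<open>j\<close>. For \<open>j = n(n-1)\<close> this gives \<open>u_(n(n-1)) = \<lambda>\<^sub>n\<inverse> \<lambda>\<^sub>n = e\<close>, and at the skip \<open>j_p\<close> it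
  identifies the inversion \<open>t_(j_p)\<close> with \<open>r_p\<close>.\<close>

section \<open>Periodic permutations and affine reflections\<close>

lemma mod_add_diff_eq_of_mod_eq:
  fixes k i j m :: int
  assumes "k mod m = i mod m"
  shows "(k + (j - i)) mod m = j mod m"
  using mod_add_cong[OF assms refl, of "j - i"] by simp

definition periodic_perm :: "nat \<Rightarrow> (int \<Rightarrow> int) \<Rightarrow> bool" where
  "periodic_perm n f \<longleftrightarrow> bij f \<and> (\<forall>k. f (k + int n) = f k + int n)"

lemma periodic_perm_shift:
  assumes "periodic_perm n f"
  shows "f (k + t * int n) = f k + t * int n"
proof (induction t rule: int_induct[where k = 0])
  case base
  then show ?case by simp
next
  case (step1 t)
  have "f (k + (t + 1) * int n) = f ((k + t * int n) + int n)" by (simp add: algebra_simps)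
  also have "\<dots> = f (k + t * int n) + int n" using assms by (simp add: periodic_perm_def)
  finally show ?case using step1 by (simp add: algebra_simps)
next
  case (step2 t)
  have "f (k + (t - 1) * int n) + int n = f ((k + (t - 1) * int n) + int n)"
    using assms by (simp add: periodic_perm_def)
  also have "\<dots> = f (k + t * int n)" by (simp add: algebra_simps)
  finally show ?case using step2 by (simp add: algebra_simps)
qed

lemma periodic_perm_shift_mod:
  assumes "periodic_perm n f" and "k mod int n = k' mod int n"
  shows "f k' = f k + (k' - k)"
proof -
  obtain t where "k' = k + int n * t" using assms(2) by (rule mod_eqE)
  then show ?thesis using periodic_perm_shift[OF assms(1), of k t] by (simp add: mult.commute)
qed

lemma periodic_perm_comp: "periodic_perm n f \<Longrightarrow> periodic_perm n g \<Longrightarrow> periodic_perm n (f \<circ> g)"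
  unfolding periodic_perm_def by (auto intro: bij_comp)

lemma periodic_perm_id: "periodic_perm n id"
  unfolding periodic_perm_def by simp

lemma periodic_perm_mod_eq_iff:
  assumes "periodic_perm n f"
  shows "f k mod int n = f k' mod int n \<longleftrightarrow> k mod int n = k' mod int n"
proof
  assume "k mod int n = k' mod int n"
  then obtain t where "k' = k + int n * t" by (rule mod_eqE)
  then show "f k mod int n = f k' mod int n"
    using periodic_perm_shift[OF assms, of k t] by (simp add: mult.commute)
next
  assume "f k mod int n = f k' mod int n"
  then obtain t where "f k' = f k + int n * t" by (rule mod_eqE)
  then have "f k' = f (k + t * int n)" using periodic_perm_shift[OF assms] by (simp add: mult.commute)
  then have "k' = k + t * int n"
    using assms unfolding periodic_perm_def bij_def inj_def by blast
  then show "k mod int n = k' mod int n" by simp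
qed

lemma refl_aff_cong:
  assumes "i mod int n = i' mod int n" and "j - i = j' - i'"
  shows "refl_aff n i j = refl_aff n i' j'"
proof -
  have "j' = j + (i' - i)" using assms(2) by simp
  moreover have "(i' - i) mod int n = 0" using assms(1)[symmetric] by (simp add: mod_eq_dvd_iff)
  ultimately have "j mod int n = j' mod int n" by (metis add_0_right mod_add_right_eq)
  then show ?thesis using assms unfolding refl_aff_def by (intro ext) simp
qed

lemma refl_aff_apply_left: "k mod int n = i mod int n \<Longrightarrow> refl_aff n i j k = k + (j - i)"
  unfolding refl_aff_def by simp

lemma refl_aff_apply_right:
  "k mod int n = j mod int n \<Longrightarrow> i mod int n \<noteq> j mod int n \<Longrightarrow> refl_aff n i j k = k + (i - j)"
  unfolding refl_aff_def by simp

lemma refl_aff_other: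
  "k mod int n \<noteq> i mod int n \<Longrightarrow> k mod int n \<noteq> j mod int n \<Longrightarrow> refl_aff n i j k = k"
  unfolding refl_aff_def by simp

lemma refl_aff_involution:
  assumes "i mod int n \<noteq> j mod int n"
  shows "refl_aff n i j (refl_aff n i j k) = k"
  unfolding refl_aff_def
  using assms mod_add_diff_eq_of_mod_eq[of k "int n" i j] mod_add_diff_eq_of_mod_eq[of k "int n" j i]
  by auto

lemma periodic_perm_refl_aff:
  assumes "i mod int n \<noteq> j mod int n"
  shows "periodic_perm n (refl_aff n i j)"
proof -
  have "bij (refl_aff n i j)"
    by (rule o_bij[of "refl_aff n i j"]) (auto simp: refl_aff_involution[OF assms] fun_eq_iff)
  moreover have "refl_aff n i j (k + int n) = refl_aff n i j k + int n" for k
    unfolding refl_aff_def by simp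
  ultimately show ?thesis unfolding periodic_perm_def by blast
qed

lemma conj_refl_aff:
  assumes g: "periodic_perm n g" and ij: "i mod int n \<noteq> j mod int n"
  shows "g \<circ> refl_aff n i j \<circ> inv g = refl_aff n (g i) (g j)"
proof
  fix k
  have bij: "bij g" using g by (simp add: periodic_perm_def)
  obtain k' where k: "k = g k'" using bij by (meson bij_is_surj surjD)
  have lhs: "(g \<circ> refl_aff n i j \<circ> inv g) k = g (refl_aff n i j k')"
    using bij by (simp add: k bij_is_inj)
  have gij: "g i mod int n \<noteq> g j mod int n"
    using periodic_perm_mod_eq_iff[OF g] ij by blast
  consider "k' mod int n = i mod int n" | "k' mod int n = j mod int n"
    | "k' mod int n \<noteq> i mod int n" "k' mod int n \<noteq> j mod int n" by blast
  then show "(g \<circ> refl_aff n i j \<circ> inv g) k = refl_aff n (g i) (g j) k"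
  proof cases
    case 1
    have "k mod int n = g i mod int n"
      using periodic_perm_mod_eq_iff[OF g] 1 k by simp
    then have "refl_aff n (g i) (g j) k = g (k' + (j - i))"
      using periodic_perm_shift_mod[OF g 1[symmetric]]
        periodic_perm_shift_mod[OF g mod_add_diff_eq_of_mod_eq[OF 1, of j, symmetric]] k
      by (simp add: refl_aff_apply_left)
    then show ?thesis using lhs 1 by (simp add: refl_aff_apply_left)
  next
    case 2
    have "k mod int n = g j mod int n"
      using periodic_perm_mod_eq_iff[OF g] 2 k by simp
    then have "refl_aff n (g i) (g j) k = g (k' + (i - j))"
      using periodic_perm_shift_mod[OF g 2[symmetric]] gij
        periodic_perm_shift_mod[OF g mod_add_diff_eq_of_mod_eq[OF 2, of i, symmetric]] k
      by (simp add: refl_aff_apply_right)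
    then show ?thesis using lhs 2 ij by (simp add: refl_aff_apply_right)
  next
    case 3
    then have "k mod int n \<noteq> g i mod int n" "k mod int n \<noteq> g j mod int n"
      using periodic_perm_mod_eq_iff[OF g] k by metis+
    then show ?thesis using 3 lhs k by (simp add: refl_aff_other)
  qed
qed

lemma prod_perms_Nil [simp]: "prod_perms [] = id"
  unfolding prod_perms_def by simp

lemma prod_perms_Cons [simp]: "prod_perms (w # ws) = w \<circ> prod_perms ws"
  unfolding prod_perms_def by simp

lemma prod_perms_append [simp]: "prod_perms (vs @ ws) = prod_perms vs \<circ> prod_perms ws"
  by (induction vs) (auto simp: comp_assoc)

lemma periodic_perm_prod_perms:
  "(\<And>w. w \<in> set ws \<Longrightarrow> periodic_perm n w) \<Longrightarrow> periodic_perm n (prod_perms ws)"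
  by (induction ws) (auto intro: periodic_perm_comp periodic_perm_id)

lemma conj_right_factor:
  assumes "bij P" "bij W" "W = P \<circ> U"
  shows "U \<circ> s \<circ> inv U = inv P \<circ> (W \<circ> s \<circ> inv W) \<circ> P"
proof -
  have U: "U = inv P \<circ> W"
    using assms by (simp add: comp_assoc[symmetric] bij_is_inj inv_o_cancel)
  have "inv U = inv W \<circ> P"
    unfolding U using assms by (simp add: o_inv_distrib bij_imp_bij_inv inv_inv_eq)
  then show ?thesis unfolding U by (simp add: comp_assoc)
qed

lemma prefix_prod_0 [simp]: "prefix_prod u 0 = id"
  unfolding prefix_prod_def by simp

lemma prefix_prod_Suc: "t < length u \<Longrightarrow> prefix_prod u (Suc t) = prefix_prod u t \<circ> u ! t"
  unfolding prefix_prod_def by (simp add: take_Suc_conv_app_nth)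

lemma prefix_prod_length: "prefix_prod u (length u) = prod_perms u"
  unfolding prefix_prod_def by simp

section \<open>The word for \<open>\<lambda>\<^sub>n\<close> and its inversions\<close>

lemma simple_refl_mod_ne:
  assumes "n \<ge> 2" "i < n"
  shows "int i mod int n \<noteq> (int i + 1) mod int n"
proof (cases "i + 1 < n")
  case True
  then show ?thesis using assms by simp
next
  case False
  then have "int i + 1 = int n" "int i mod int n = int i" "i \<noteq> 0" using assms by auto
  then show ?thesis by simp
qed

lemma periodic_perm_simple_refl: "n \<ge> 2 \<Longrightarrow> i < n \<Longrightarrow> periodic_perm n (simple_refl n i)"
  unfolding simple_refl_def by (rule periodic_perm_refl_aff) (rule simple_refl_mod_ne)

definition simple_prefix :: "nat \<Rightarrow> nat \<Rightarrow> int \<Rightarrow> int" where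
  "simple_prefix n r = prod_perms (map (simple_refl n) [0..<r])"

definition coxeter :: "nat \<Rightarrow> int \<Rightarrow> int" where
  "coxeter n = simple_prefix n n"

definition word_prefix :: "nat \<Rightarrow> nat \<Rightarrow> int \<Rightarrow> int" where
  "word_prefix n j = prod_perms (map (sigma n) [1..<j+1])"

lemma simple_prefix_apply:
  assumes "n \<ge> 2" "r < n"
  shows "simple_prefix n r k =
    (if k mod int n < int r then k + 1 else if k mod int n = int r then k - int r else k)"
  using assms(2)
proof (induction r arbitrary: k)
  case 0
  have "0 \<le> k mod int n" using assms(1) by simp
  then show ?case by (simp add: simple_prefix_def)
next
  case (Suc r)
  have IH: "simple_prefix n r k' =
      (if k' mod int n < int r then k' + 1 else if k' mod int n = int r then k' - int r else k')" for k'
    using Suc by simp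
  have split: "simple_prefix n (Suc r) = simple_prefix n r \<circ> simple_refl n r"
    unfolding simple_prefix_def by simp
  have r: "int r mod int n = int r" "(int r + 1) mod int n = int r + 1" using Suc.prems by auto
  consider "k mod int n = int r" | "k mod int n = int r + 1"
    | "k mod int n \<noteq> int r" "k mod int n \<noteq> int r + 1" by blast
  then show ?case
  proof cases
    case 1
    then have "(k + 1) mod int n = int r + 1"
      using mod_add_diff_eq_of_mod_eq[of k "int n" "int r" "int r + 1"] r by simp
    then show ?thesis using split IH[of "k + 1"] 1 r by (simp add: simple_refl_def refl_aff_def)
  next
    case 2
    then have "(k - 1) mod int n = int r"
      using mod_add_diff_eq_of_mod_eq[of k "int n" "int r + 1" "int r"] r by simp
    then show ?thesis using split IH[of "k - 1"] 2 r by (simp add: simple_refl_def refl_aff_def)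
  next
    case 3
    then show ?thesis using split IH[of k] r by (auto simp: simple_refl_def refl_aff_def)
  qed
qed

lemma coxeter_apply:
  assumes n: "n \<ge> 2"
  shows "coxeter n k =
    (if k mod int n = 0 then k - int n else if k mod int n = int n - 1 then k + 2 else k + 1)"
proof -
  have "[0..<n] = [0..<n - 1] @ [n - 1]" using n by (cases n) auto
  then have split: "coxeter n = simple_prefix n (n - 1) \<circ> simple_refl n (n - 1)"
    unfolding coxeter_def simple_prefix_def by simp
  have pre: "simple_prefix n (n - 1) k' = (if k' mod int n < int n - 1 then k' + 1
      else if k' mod int n = int n - 1 then k' - (int n - 1) else k')" for k'
    using simple_prefix_apply[OF n, of "n - 1" k'] n by simp
  have refl: "simple_refl n (n - 1) = refl_aff n (int n - 1) (int n)"
    unfolding simple_refl_def using n by simp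
  have last: "(int n - 1) mod int n = int n - 1" using n by (intro mod_pos_pos_trivial) auto
  have n0: "0 < int n" using n by simp
  have "0 \<le> k mod int n" "k mod int n < int n" using n by auto
  then consider "k mod int n = 0" | "k mod int n = int n - 1"
    | "0 < k mod int n" "k mod int n < int n - 1" by linarith
  then show ?thesis
  proof cases
    case 1
    then have "(k - 1) mod int n = int n - 1"
      using mod_add_diff_eq_of_mod_eq[of k "int n" "int n" "int n - 1"] last zmod_minus1[OF n0] by simp
    then show ?thesis using split pre refl 1 n zmod_minus1[OF n0] by (simp add: refl_aff_def)
  next
    case 2
    have "(k + 1) mod int n = (k mod int n + 1) mod int n" by (simp add: mod_add_left_eq)
    then have "(k + 1) mod int n = 0" using 2 by simp
    then show ?thesis using split pre refl 2 n last by (simp add: refl_aff_def)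
  next
    case 3
    then show ?thesis using split pre refl last by (simp add: refl_aff_def)
  qed
qed

text \<open>\<open>nonmult n\<close> enumerates the integers not divisible by \<open>n\<close> increasingly, with
  \<open>nonmult n 1 = 1\<close>; \<open>nonmult_index n\<close> is its inverse.\<close>

definition nonmult :: "nat \<Rightarrow> int \<Rightarrow> int" where
  "nonmult n i = i + (i - 1) div (int n - 1)"

definition nonmult_index :: "nat \<Rightarrow> int \<Rightarrow> int" where
  "nonmult_index n k = k - k div int n"

lemma nonmult_eq_div_mod:
  assumes "n \<ge> 2"
  shows "nonmult n i = (i - 1) div (int n - 1) * int n + ((i - 1) mod (int n - 1) + 1)"
  using div_mult_mod_eq[of "i - 1" "int n - 1"] unfolding nonmult_def by (simp add: algebra_simps)

lemma nonmult_mod: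
  assumes n: "n \<ge> 2"
  shows "nonmult n i mod int n = (i - 1) mod (int n - 1) + 1"
proof -
  have "0 \<le> (i - 1) mod (int n - 1)" "(i - 1) mod (int n - 1) < int n - 1" using n by auto
  then show ?thesis unfolding nonmult_eq_div_mod[OF n] by simp
qed

lemma nonmult_div:
  assumes n: "n \<ge> 2"
  shows "nonmult n i div int n = (i - 1) div (int n - 1)"
proof -
  have "0 \<le> (i - 1) mod (int n - 1)" "(i - 1) mod (int n - 1) < int n - 1" using n by auto
  then have "((i - 1) mod (int n - 1) + 1) div int n = 0" by simp
  then show ?thesis unfolding nonmult_eq_div_mod[OF n] using n by simp
qed

lemma nonmult_mod_nonzero: "n \<ge> 2 \<Longrightarrow> nonmult n i mod int n \<noteq> 0"
  using nonmult_mod[of n i] by (simp add: add_nonneg_eq_0_iff)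

lemma nonmult_index_nonmult: "n \<ge> 2 \<Longrightarrow> nonmult_index n (nonmult n i) = i"
  using div_mult_mod_eq[of "i - 1" "int n - 1"] nonmult_eq_div_mod[of n i]
  unfolding nonmult_index_def nonmult_div by (simp add: algebra_simps)

lemma nonmult_nonmult_index:
  assumes n: "n \<ge> 2" and k: "k mod int n \<noteq> 0"
  shows "nonmult n (nonmult_index n k) = k"
proof -
  have b: "1 \<le> k mod int n" "k mod int n \<le> int n - 1"
    using k pos_mod_sign[of "int n" k] pos_mod_bound[of "int n" k] n by linarith+
  have "nonmult_index n k - 1 = (k mod int n - 1) + k div int n * (int n - 1)"
    using div_mult_mod_eq[of k "int n"] unfolding nonmult_index_def by (simp add: algebra_simps)
  then have "(nonmult_index n k - 1) div (int n - 1)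
      = k div int n + (k mod int n - 1) div (int n - 1)"
    using n by (simp only:) (rule div_mult_self1, simp)
  moreover have "(k mod int n - 1) div (int n - 1) = 0" using b by simp
  ultimately have "(nonmult_index n k - 1) div (int n - 1) = k div int n" by simp
  then show ?thesis
    using div_mult_mod_eq[of k "int n"] unfolding nonmult_def nonmult_index_def by simp
qed

lemma nonmult_add_mult:
  assumes "n \<ge> 2"
  shows "nonmult n (i + t * (int n - 1)) = nonmult n i + t * int n"
proof -
  have "i + t * (int n - 1) - 1 = (i - 1) + t * (int n - 1)" by simp
  then have "(i + t * (int n - 1) - 1) div (int n - 1) = t + (i - 1) div (int n - 1)"
    using assms by (simp only:) (rule div_mult_self1, simp)
  then show ?thesis unfolding nonmult_def by (simp add: algebra_simps)
qed

lemma nonmult_mono: "n \<ge> 2 \<Longrightarrow> i \<le> i' \<Longrightarrow> nonmult n i \<le> nonmult n i'"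
  unfolding nonmult_def by (simp add: add_mono zdiv_mono1)

lemma nonmult_index_strict_mono:
  assumes n: "n \<ge> 2" and "k mod int n \<noteq> 0" "k' mod int n \<noteq> 0" "k < k'"
  shows "nonmult_index n k < nonmult_index n k'"
  using nonmult_mono[OF n, of "nonmult_index n k'" "nonmult_index n k"]
    nonmult_nonmult_index[OF n] assms(2-4) by fastforce

lemma nonmult_index_bounds:
  assumes n: "n \<ge> 2" and k: "k mod int n \<noteq> 0" "0 < k" "k < int n * int n"
  shows "1 \<le> nonmult_index n k" "nonmult_index n k \<le> int n * (int n - 1)"
proof -
  have "nonmult n 0 = -1" using n by (simp add: nonmult_def div_eq_minus1)
  then show "1 \<le> nonmult_index n k"
    using nonmult_mono[OF n, of "nonmult_index n k" 0] nonmult_nonmult_index[OF n k(1)] k(2)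
    by fastforce
  have "int n * (int n - 1) div (int n - 1) = int n" using n by simp
  then have "nonmult n (int n * (int n - 1) + 1) = int n * int n + 1"
    unfolding nonmult_def by (simp add: algebra_simps)
  then show "nonmult_index n k \<le> int n * (int n - 1)"
    using nonmult_mono[OF n, of "int n * (int n - 1) + 1" "nonmult_index n k"]
      nonmult_nonmult_index[OF n k(1)] k(3) by fastforce
qed

lemma coxeter_nonmult:
  assumes n: "n \<ge> 2"
  shows "coxeter n (nonmult n i) = nonmult n (i + 1)"
proof -
  define q where "q = (i - 1) div (int n - 1)"
  define b where "b = (i - 1) mod (int n - 1)"
  have b: "0 \<le> b" "b < int n - 1" using n unfolding b_def by auto
  have i: "i = (b + 1) + q * (int n - 1)"
    using div_mult_mod_eq[of "i - 1" "int n - 1"] unfolding q_def b_def by simp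
  have nm: "nonmult n i = i + q" "nonmult n i mod int n = b + 1"
    using nonmult_mod[OF n, of i] unfolding nonmult_def q_def b_def by simp_all
  show ?thesis
  proof (cases "b = int n - 2")
    case True
    then have "i = (q + 1) * (int n - 1)" using i by (simp add: algebra_simps)
    then have "i div (int n - 1) = q + 1" using n by simp
    then show ?thesis using coxeter_apply[OF n] nm nonmult_mod_nonzero[OF n, of i] True
      by (simp add: nonmult_def)
  next
    case False
    then have "(b + 1) div (int n - 1) = 0" using b by simp
    then have "i div (int n - 1) = q" using i n by simp
    then show ?thesis using coxeter_apply[OF n] nm nonmult_mod_nonzero[OF n, of i] False
      by (simp add: nonmult_def)
  qed
qed

lemma coxeter_mult: "n \<ge> 2 \<Longrightarrow> k mod int n = 0 \<Longrightarrow> coxeter n k = k - int n"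
  by (simp add: coxeter_apply)

lemma coxeter_funpow_nonmult:
  "n \<ge> 2 \<Longrightarrow> (coxeter n ^^ q) (nonmult n i) = nonmult n (i + int q)"
  by (induction q) (simp_all add: coxeter_nonmult ac_simps)

lemma coxeter_funpow_mult:
  assumes "n \<ge> 2" "k mod int n = 0"
  shows "(coxeter n ^^ q) k = k - int q * int n"
proof (induction q)
  case (Suc q)
  have "(k - int q * int n) mod int n = 0" using assms(2) by (simp add: mod_diff_eq[symmetric])
  then have "(coxeter n ^^ Suc q) k = k - int q * int n - int n"
    using Suc coxeter_mult[OF assms(1)] by simp
  then show ?case by (simp add: algebra_simps)
qed simp

lemma periodic_perm_word_prefix: "n \<ge> 2 \<Longrightarrow> periodic_perm n (word_prefix n j)"
  unfolding word_prefix_def sigma_def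
  by (rule periodic_perm_prod_perms) (auto intro: periodic_perm_simple_refl)

lemma word_prefix_Suc: "word_prefix n (Suc j) = word_prefix n j \<circ> sigma n (Suc j)"
  unfolding word_prefix_def by simp

lemma word_prefix_decomp:
  assumes n: "n \<ge> 2" and r: "r < n"
  shows "word_prefix n (q * n + r) = (coxeter n ^^ q) \<circ> simple_prefix n r"
proof (induction q)
  let ?s = "\<lambda>i. simple_refl n (i mod n)"
  have word: "word_prefix n j = prod_perms (map ?s [0..<j])" for j
  proof -
    have "[1..<j+1] = map Suc [0..<j]" by (simp add: map_Suc_upt)
    then show ?thesis unfolding word_prefix_def sigma_def by (simp add: comp_def)
  qed
  {
    case 0
    have "word_prefix n r = simple_prefix n r"
      unfolding word simple_prefix_def using r by (intro arg_cong[where f = prod_perms] map_cong) auto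
    then show ?case by simp
  next
    case (Suc q)
    have "[0..<Suc q * n + r] = [0..<n] @ [n..<n + (q * n + r)]"
      by (simp add: upt_add_eq_append[symmetric] add.assoc)
    also have "[n..<n + (q * n + r)] = map (\<lambda>i. i + n) [0..<q * n + r]"
      by (metis add.commute add_0 map_add_upt)
    finally have split: "[0..<Suc q * n + r] = [0..<n] @ map (\<lambda>i. i + n) [0..<q * n + r]" .
    have shift: "map ?s (map (\<lambda>i. i + n) [0..<q * n + r]) = map ?s [0..<q * n + r]" by simp
    have "prod_perms (map ?s [0..<n]) = coxeter n"
      unfolding coxeter_def simple_prefix_def by (intro arg_cong[where f = prod_perms] map_cong) auto
    then have "word_prefix n (Suc q * n + r) = coxeter n \<circ> word_prefix n (q * n + r)"
      unfolding word split map_append prod_perms_append shift by simp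
    then show ?case using Suc by (simp add: comp_assoc funpow_Suc_right[symmetric])
  }
qed

lemma simple_prefix_at:
  assumes n: "n \<ge> 2" and r: "r < n"
  shows "simple_prefix n r (int r) = 0" "simple_prefix n r (int r + 1) = nonmult n (int r + 1)"
proof -
  show "simple_prefix n r (int r) = 0" using simple_prefix_apply[OF n r] r by simp
  show "simple_prefix n r (int r + 1) = nonmult n (int r + 1)"
  proof (cases "r + 1 < n")
    case True
    then show ?thesis using simple_prefix_apply[OF n r] by (simp add: nonmult_def)
  next
    case False
    then have "int r + 1 = int n" "r \<noteq> 0" using r n by auto
    then show ?thesis using simple_prefix_apply[OF n r] n by (simp add: nonmult_def)
  qed
qed

lemma word_prefix_conj_sigma:
  assumes n: "n \<ge> 2" and j: "j \<ge> 1"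
  shows "word_prefix n (j - 1) \<circ> sigma n j \<circ> inv (word_prefix n (j - 1))
    = refl_aff n 0 (nonmult n (int j))"
proof -
  define q where "q = (j - 1) div n"
  define r where "r = (j - 1) mod n"
  have r: "r < n" unfolding r_def using n by simp
  have j_nat: "j = q * n + r + 1"
    using div_mult_mod_eq[of "j - 1" n] j unfolding q_def r_def by linarith
  then have j_eq: "int j = int q * int n + int r + 1" by simp
  have W: "word_prefix n (j - 1) = (coxeter n ^^ q) \<circ> simple_prefix n r"
    using word_prefix_decomp[OF n r, of q] j_nat by simp
  have "word_prefix n (j - 1) \<circ> sigma n j \<circ> inv (word_prefix n (j - 1))
      = refl_aff n (word_prefix n (j - 1) (int r)) (word_prefix n (j - 1) (int r + 1))"
    unfolding sigma_def simple_refl_def r_def[symmetric]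
    using conj_refl_aff periodic_perm_word_prefix[OF n] simple_refl_mod_ne[OF n r] by blast
  also have "\<dots> = refl_aff n (- int q * int n) (nonmult n (int r + 1 + int q))"
    using W simple_prefix_at[OF n r] coxeter_funpow_mult[OF n, of 0 q]
      coxeter_funpow_nonmult[OF n] by simp
  also have "\<dots> = refl_aff n 0 (nonmult n (int j))"
  proof (rule refl_aff_cong)
    show "(- int q * int n) mod int n = 0 mod int n" by simp
    show "nonmult n (int r + 1 + int q) - - int q * int n = nonmult n (int j) - 0"
      using nonmult_add_mult[OF n, of "int r + 1 + int q" "int q"] j_eq
      by (simp add: algebra_simps)
  qed
  finally show ?thesis .
qed

lemma word_prefix_full:
  assumes n: "n \<ge> 2"
  shows "word_prefix n (n * (n - 1)) = lambda_aff n"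
proof
  fix k
  have W: "word_prefix n (n * (n - 1)) = coxeter n ^^ (n - 1)"
    using word_prefix_decomp[OF n, of 0 "n - 1"] n by (simp add: simple_prefix_def mult.commute)
  show "word_prefix n (n * (n - 1)) k = lambda_aff n k"
  proof (cases "k mod int n = 0")
    case True
    then show ?thesis
      using W coxeter_funpow_mult[OF n True, of "n - 1"] n
      by (simp add: lambda_aff_def of_nat_diff algebra_simps)
  next
    case False
    have "(coxeter n ^^ (n - 1)) k = (coxeter n ^^ (n - 1)) (nonmult n (nonmult_index n k))"
      using nonmult_nonmult_index[OF n False] by simp
    also have "\<dots> = nonmult n (nonmult_index n k + (int n - 1))"
      using coxeter_funpow_nonmult[OF n] n by (simp add: of_nat_diff)
    also have "\<dots> = k + int n"
      using nonmult_add_mult[OF n, of _ 1] nonmult_nonmult_index[OF n False] by simp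
    finally show ?thesis using W False by (simp add: lambda_aff_def)
  qed
qed

section \<open>Neighbour lists\<close>

lemma modn_eq_iff: "1 \<le> k \<Longrightarrow> k \<le> int n \<Longrightarrow> modn n v = k \<longleftrightarrow> v mod int n = k mod int n"
  unfolding modn_def
  by (smt (verit, ccfv_SIG) mod_pos_pos_trivial mod_self pos_mod_bound pos_mod_sign)

lemma modn_mod: "modn n v mod int n = v mod int n"
  unfolding modn_def by simp

lemma modn_bounds: "n > 0 \<Longrightarrow> 1 \<le> modn n v \<and> modn n v \<le> int n"
proof -
  assume "n > 0"
  then have "0 \<le> v mod int n" "v mod int n < int n" by simp_all
  then show ?thesis by (auto simp: modn_def)
qed

lemma sorted_wrt_map_filter_uptD:
  assumes "sorted_wrt R (map g (filter Q [lo..<hi]))"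
    and "Q i" "Q i'" "lo \<le> i" "i < i'" "i' < hi"
  shows "R (g i) (g i')"
proof -
  have "[lo..<hi] = [lo..<i'] @ [i'..<hi]" using upt_add_eq_append[of lo i' "hi - i'"] assms by simp
  then have "sorted_wrt R (map g (filter Q [lo..<i']) @ map g (filter Q [i'..<hi]))"
    using assms(1) by simp
  moreover have "g i \<in> set (map g (filter Q [lo..<i']))" "g i' \<in> set (map g (filter Q [i'..<hi]))"
    using assms by auto
  ultimately show ?thesis by (auto simp: sorted_wrt_append)
qed

lemma sorted_wrt_map_butlast_filter_uptD:
  assumes "sorted_wrt R (map g (butlast (filter Q [lo..<hi])))"
    and "Q i" "Q i'" "Q i''" "lo \<le> i" "i < i'" "i' < i''" "i'' < hi"
  shows "R (g i) (g i')"
proof -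
  have "[lo..<hi] = [lo..<Suc i'] @ [Suc i'..<hi]"
    using upt_add_eq_append[of lo "Suc i'" "hi - Suc i'"] assms by simp
  moreover have "filter Q [Suc i'..<hi] \<noteq> []" using assms by (auto simp: filter_empty_conv)
  ultimately have "butlast (filter Q [lo..<hi])
      = filter Q [lo..<Suc i'] @ butlast (filter Q [Suc i'..<hi])"
    by (simp add: butlast_append)
  then have "sorted_wrt R (map g (filter Q [lo..<Suc i']))"
    using assms(1) by (simp add: sorted_wrt_append)
  then show ?thesis using sorted_wrt_map_filter_uptD assms by blast
qed

text \<open>Subtracting \<open>k\<close> modulo \<open>n\<close> turns the cyclic order of condition (ii) into the usual
  order.\<close>

lemma cyc_cond_sorted_rotated:
  fixes k :: int and cs :: "int list"
  assumes cyc: "cyc_cond k cs" and k: "1 \<le> k" "k < int n"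
    and cs: "\<And>c. c \<in> set cs \<Longrightarrow> 1 \<le> c \<and> c \<le> int n \<and> c \<noteq> k"
  shows "sorted_wrt (<) (map (\<lambda>c. (c - k) mod int n) (butlast cs))"
proof -
  obtain j where j: "j \<in> {1..length cs}"
    and sorted: "sorted_wrt (<) (drop (j - 1) (butlast cs) @ [k] @ take (j - 1) cs)"
    using cyc unfolding cyc_cond_def by blast
  define lo where "lo = drop (j - 1) (butlast cs)"
  define hi where "hi = take (j - 1) cs"
  have "take (j - 1) (butlast cs) = hi" unfolding hi_def by (rule take_butlast) (use j in auto)
  then have butlast_cs: "butlast cs = hi @ lo" unfolding lo_def by (metis append_take_drop_id)
  moreover have "set (butlast cs) \<subseteq> set cs" by (meson in_set_butlastD subsetI)
  ultimately have lo_hi_cs: "set lo \<subseteq> set cs" "set hi \<subseteq> set cs" by auto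
  have s: "sorted_wrt (<) lo" "sorted_wrt (<) hi" and lo_k: "\<forall>c\<in>set lo. c < k"
    and hi_k: "\<forall>c\<in>set hi. k < c"
    using sorted unfolding lo_def[symmetric] hi_def[symmetric] by (auto simp: sorted_wrt_append)
  have hi_mod: "(c - k) mod int n = c - k" if "c \<in> set hi" for c
    using that hi_k cs[of c] lo_hi_cs k by (intro mod_pos_pos_trivial) auto
  have lo_mod: "(c - k) mod int n = c - k + int n" if "c \<in> set lo" for c
  proof -
    have "(c - k) mod int n = (c - k + int n) mod int n" by simp
    also have "\<dots> = c - k + int n"
      using that lo_k cs[of c] lo_hi_cs k by (intro mod_pos_pos_trivial) auto
    finally show ?thesis .
  qed
  have "sorted_wrt (<) (map (\<lambda>c. (c - k) mod int n) hi)"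
    unfolding sorted_wrt_map by (rule sorted_wrt_mono_rel[OF _ s(2)]) (simp add: hi_mod)
  moreover have "sorted_wrt (<) (map (\<lambda>c. (c - k) mod int n) lo)"
    unfolding sorted_wrt_map by (rule sorted_wrt_mono_rel[OF _ s(1)]) (simp add: lo_mod)
  moreover have "(c - k) mod int n < (c' - k) mod int n" if "c \<in> set hi" "c' \<in> set lo" for c c'
  proof -
    have "c \<le> int n" "1 \<le> c'" using that cs[of c] cs[of c'] lo_hi_cs by auto
    then show ?thesis using that hi_mod lo_mod by simp
  qed
  ultimately show ?thesis unfolding butlast_cs by (auto simp: sorted_wrt_append)
qed

section \<open>The path of a cyclic factorization\<close>

text \<open>Shifting the witnesses \<open>a\<close>, \<open>b\<close> by multiples of \<open>n\<close> so that consecutive reflections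
  share an endpoint: \<open>r_i = ((x_(i-1), x_i))\<close> with \<open>x_0 < x_1 < \<dots> < x_(2n-2)\<close>.\<close>

primrec tree_path :: "(nat \<Rightarrow> int) \<Rightarrow> (nat \<Rightarrow> int) \<Rightarrow> nat \<Rightarrow> int" where
  "tree_path a b 0 = a 0"
| "tree_path a b (Suc i) = tree_path a b i + (b (Suc i) - a i)"

locale cyclic_factorization =
  fixes n :: nat and rs :: "(int \<Rightarrow> int) list" and a b :: "nat \<Rightarrow> int"
  assumes n: "n \<ge> 2"
    and tree_like: "tree_like_wit n rs a b"
    and prod_rs: "prod_perms rs = lambda_aff n"
    and sorted_nbr_list: "sorted_wrt (<) (nbr_list n a b (int n))"
    and cyc_cond_nbr_list: "\<forall>k\<in>{1..<int n}. cyc_cond k (nbr_list n a b k)"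
begin

abbreviation m :: nat where "m \<equiv> 2 * n - 2"

definition path :: "nat \<Rightarrow> int" where "path = tree_path a b"

lemma n_pos: "int n > 0"
  using n by simp

lemma length_rs: "length rs = m"
  using tree_like unfolding tree_like_wit_def by blast

lemma tree_like_nth:
  "t < m \<Longrightarrow> a t mod int n \<noteq> b (Suc t) mod int n \<and> rs ! t = refl_aff n (a t) (b (Suc t))
    \<and> a t < b (Suc t)"
proof -
  assume "t < m"
  then have "Suc t \<in> {1..m}" by simp
  then show ?thesis using tree_like unfolding tree_like_wit_def by fastforce
qed

lemma path_Suc: "path (Suc t) = path t + (b (Suc t) - a t)"
  unfolding path_def by simp

lemma path_mod_a: "t < m \<Longrightarrow> path t mod int n = a t mod int n"
proof (induction t)
  case 0
  then show ?case by (simp add: path_def)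
next
  case (Suc t)
  have "path (Suc t) mod int n = (a t + (b (Suc t) - a t)) mod int n"
    unfolding path_Suc using Suc by (intro mod_add_cong) simp_all
  also have "\<dots> = a (Suc t) mod int n"
    using tree_like Suc.prems unfolding tree_like_wit_def by simp
  finally show ?case .
qed

lemma path_Suc_mod_b: "t < m \<Longrightarrow> path (Suc t) mod int n = b (Suc t) mod int n"
  using mod_add_cong[OF path_mod_a refl, of t "b (Suc t) - a t"] by (simp add: path_Suc)

lemma path_less_Suc: "t < m \<Longrightarrow> path t < path (Suc t)"
  using tree_like_nth by (simp add: path_Suc)

lemma path_Suc_mod_ne: "t < m \<Longrightarrow> path t mod int n \<noteq> path (Suc t) mod int n"
  using tree_like_nth path_mod_a path_Suc_mod_b by simp

lemma rs_nth: "t < m \<Longrightarrow> rs ! t = refl_aff n (path t) (path (Suc t))"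
proof -
  assume t: "t < m"
  have "rs ! t = refl_aff n (a t) (b (Suc t))" using tree_like_nth[OF t] by blast
  also have "\<dots> = refl_aff n (path t) (path (Suc t))"
    by (rule refl_aff_cong) (use path_mod_a[OF t] in \<open>simp_all add: path_Suc\<close>)
  finally show ?thesis .
qed

lemma path_strict_mono: "t < t' \<Longrightarrow> t' \<le> m \<Longrightarrow> path t < path t'"
proof (induction t')
  case (Suc t')
  then show ?case using path_less_Suc[of t'] by (cases "t = t'") auto
qed simp

lemma periodic_perm_rs_nth: "t < m \<Longrightarrow> periodic_perm n (rs ! t)"
  using rs_nth path_Suc_mod_ne periodic_perm_refl_aff by simp

lemma rs_nth_involution: "t < m \<Longrightarrow> (rs ! t) ((rs ! t) q) = q"
  using rs_nth path_Suc_mod_ne refl_aff_involution by simp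

lemma periodic_perm_prefix_prod: "periodic_perm n (prefix_prod rs t)"
  unfolding prefix_prod_def
  by (rule periodic_perm_prod_perms) (metis in_set_conv_nth in_set_takeD length_rs periodic_perm_rs_nth)

lemma bij_prefix_prod: "bij (prefix_prod rs t)"
  using periodic_perm_prefix_prod periodic_perm_def by blast

lemma prefix_prod_Suc_rs: "t < m \<Longrightarrow> prefix_prod rs (Suc t) = prefix_prod rs t \<circ> rs ! t"
  using prefix_prod_Suc length_rs by simp

lemma prefix_prod_m: "prefix_prod rs m = lambda_aff n"
  using prefix_prod_length[of rs] length_rs prod_rs by simp

lemma prefix_prod_path: "t \<le> m \<Longrightarrow> prefix_prod rs t (path t) = path 0"
proof (induction t)
  case (Suc t)
  have "(rs ! t) (path (Suc t)) = path t"
    using Suc rs_nth path_Suc_mod_ne refl_aff_apply_right[of "path (Suc t)" n "path (Suc t)" "path t"]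
    by simp
  then show ?case using Suc by (simp add: prefix_prod_Suc_rs)
qed simp

lemma path_m: "path m = path 0 + int n * (int n - 1)" and path_m_mod: "path m mod int n = 0"
proof -
  have lambda: "lambda_aff n (path m) = path 0" using prefix_prod_path[of m] prefix_prod_m by simp
  show "path m mod int n = 0"
  proof (rule ccontr)
    assume "path m mod int n \<noteq> 0"
    then have "path 0 = path m + int n" using lambda by (simp add: lambda_aff_def)
    then show False using path_strict_mono[of 0 m] n by simp
  qed
  then show "path m = path 0 + int n * (int n - 1)" using lambda by (simp add: lambda_aff_def)
qed

lemma path_0_mod: "path 0 mod int n = 0"
  using path_m path_m_mod by (metis mod_mult_self2 mult.commute)

lemma prefix_prod_fixes_unvisited:
  assumes "t \<le> t'" "t' \<le> m" and "\<And>i. t \<le> i \<Longrightarrow> i \<le> t' \<Longrightarrow> q mod int n \<noteq> path i mod int n"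
  shows "prefix_prod rs t' q = prefix_prod rs t q"
  using assms
proof (induction t')
  case (Suc t')
  show ?case
  proof (cases "t = Suc t'")
    case False
    then have "(rs ! t') q = q"
      using Suc.prems rs_nth[of t'] by (simp add: refl_aff_other)
    then show ?thesis using Suc False by (simp add: prefix_prod_Suc_rs)
  qed simp
qed simp

lemma prefix_prod_le:
  assumes "t \<le> m" "q mod int n \<noteq> path t mod int n"
  shows "prefix_prod rs t q \<le> q + int n"
  using assms
proof (induction t arbitrary: q rule: inc_induct)
  case base
  then show ?case using prefix_prod_m path_m_mod by (simp add: lambda_aff_def)
next
  case (step t)
  have "prefix_prod rs t q = prefix_prod rs (Suc t) ((rs ! t) q)"
    using step rs_nth_involution by (simp add: prefix_prod_Suc_rs)
  show ?case
  proof (cases "q mod int n = path (Suc t) mod int n")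
    case True
    then have "(rs ! t) q = q + (path t - path (Suc t))"
      using step path_Suc_mod_ne rs_nth by (simp add: refl_aff_apply_right)
    moreover have "(q + (path t - path (Suc t))) mod int n \<noteq> path (Suc t) mod int n"
      using mod_add_diff_eq_of_mod_eq[OF True, of "path t"] path_Suc_mod_ne step by simp
    ultimately show ?thesis
      using step \<open>prefix_prod rs t q = _\<close> path_less_Suc[of t] by fastforce
  next
    case False
    then have "(rs ! t) q = q" using step rs_nth by (simp add: refl_aff_other)
    then show ?thesis using step False \<open>prefix_prod rs t q = _\<close> by simp
  qed
qed

end

section \<open>Targets, first visits and last exits\<close>

lemma card_first_occurrences:
  fixes f :: "nat \<Rightarrow> 'a"
  shows "card {p. p \<le> m \<and> (\<forall>t<p. f t \<noteq> f p)} = card (f ` {..m})"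
proof -
  let ?F = "{p. p \<le> m \<and> (\<forall>t<p. f t \<noteq> f p)}"
  have inj: "inj_on f ?F"
  proof (rule inj_onI)
    fix p p' assume "p \<in> ?F" "p' \<in> ?F" "f p = f p'"
    then show "p = p'" using linorder_neqE_nat[of p p'] by auto
  qed
  have "f ` {..m} \<subseteq> f ` ?F"
  proof
    fix v assume "v \<in> f ` {..m}"
    then obtain t where t: "t \<le> m" "f t = v" by auto
    define t0 where "t0 = (LEAST t. f t = v)"
    have "f t0 = v" "t0 \<le> t" unfolding t0_def using t by (auto intro: LeastI Least_le)
    moreover have "\<forall>t'<t0. f t' \<noteq> v" unfolding t0_def using not_less_Least by blast
    ultimately show "v \<in> f ` ?F" using t by (auto intro!: image_eqI[of _ _ t0])
  qed
  moreover have "f ` ?F \<subseteq> f ` {..m}" by auto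
  ultimately show ?thesis using card_image[OF inj] by (simp add: subset_antisym)
qed

lemma card_last_occurrences:
  fixes f :: "nat \<Rightarrow> 'a"
  shows "card {p. p \<le> m \<and> (\<forall>t. p < t \<and> t \<le> m \<longrightarrow> f t \<noteq> f p)} = card (f ` {..m})"
proof -
  let ?L = "{p. p \<le> m \<and> (\<forall>t. p < t \<and> t \<le> m \<longrightarrow> f t \<noteq> f p)}"
  have inj: "inj_on f ?L"
  proof (rule inj_onI)
    fix p p' assume "p \<in> ?L" "p' \<in> ?L" "f p = f p'"
    then show "p = p'" using linorder_neqE_nat[of p p'] by auto
  qed
  have "f ` {..m} \<subseteq> f ` ?L"
  proof
    fix v assume "v \<in> f ` {..m}"
    then obtain t where t: "t \<le> m" "f t = v" by auto
    define S where "S = {t'. t' \<le> m \<and> f t' = v}"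
    have mem: "t' \<in> S \<longleftrightarrow> t' \<le> m \<and> f t' = v" for t' unfolding S_def by simp
    have "finite S" by (rule finite_subset[of _ "{..m}"]) (use mem in auto)
    have "t \<in> S" using mem t by auto
    then have "Max S \<in> S" and max: "\<forall>t'\<in>S. t' \<le> Max S" using \<open>finite S\<close> Max_in by auto
    then have "Max S \<le> m" "f (Max S) = v" using mem by auto
    moreover have "f t' \<noteq> v" if "Max S < t'" "t' \<le> m" for t'
      using that mem[of t'] max by auto
    ultimately show "v \<in> f ` ?L" by (auto intro!: image_eqI[of _ _ "Max S"])
  qed
  moreover have "f ` ?L \<subseteq> f ` {..m}" by auto
  ultimately show ?thesis using card_image[OF inj] by (simp add: subset_antisym)
qed

context cyclic_factorization
begin

definition target :: "nat \<Rightarrow> int" where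
  "target p = prefix_prod rs (p - 1) (path p)"

definition first_visit :: "nat \<Rightarrow> bool" where
  "first_visit p \<longleftrightarrow> 1 \<le> p \<and> p \<le> m \<and> (\<forall>t<p. path t mod int n \<noteq> path p mod int n)"

definition last_exit :: "nat \<Rightarrow> bool" where
  "last_exit p \<longleftrightarrow> 1 \<le> p \<and> p \<le> m \<and>
     (\<forall>t. p \<le> t \<and> t \<le> m \<longrightarrow> path t mod int n \<noteq> path (p - 1) mod int n)"

lemma conj_prefix_prod_rs_nth:
  assumes "t < m"
  shows "prefix_prod rs t \<circ> rs ! t \<circ> inv (prefix_prod rs t) = refl_aff n 0 (target (Suc t) - path 0)"
proof -
  have "prefix_prod rs t \<circ> rs ! t \<circ> inv (prefix_prod rs t)
      = refl_aff n (prefix_prod rs t (path t)) (prefix_prod rs t (path (Suc t)))"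
    unfolding rs_nth[OF assms]
    using conj_refl_aff periodic_perm_prefix_prod path_Suc_mod_ne[OF assms] by blast
  also have "\<dots> = refl_aff n (path 0) (target (Suc t))"
    using prefix_prod_path assms by (simp add: target_def)
  also have "\<dots> = refl_aff n 0 (target (Suc t) - path 0)"
    by (rule refl_aff_cong) (simp_all add: path_0_mod)
  finally show ?thesis .
qed

lemma target_Suc: "t < m \<Longrightarrow> target (Suc t) = prefix_prod rs (Suc t) (path t)"
  using rs_nth refl_aff_apply_left by (simp add: target_def prefix_prod_Suc_rs)

lemma target_first_visit: "first_visit p \<Longrightarrow> target p = path p"
proof -
  assume first: "first_visit p"
  have "prefix_prod rs (p - 1) (path p) = prefix_prod rs 0 (path p)"
  proof (rule prefix_prod_fixes_unvisited)
    show "p - 1 \<le> m" using first by (auto simp: first_visit_def)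
    show "path p mod int n \<noteq> path i mod int n" if "0 \<le> i" "i \<le> p - 1" for i
    proof -
      have "i < p" using first that by (auto simp: first_visit_def)
      then show ?thesis using first unfolding first_visit_def by metis
    qed
  qed simp
  then show ?thesis by (simp add: target_def)
qed

lemma target_last_exit:
  assumes "last_exit p"
  shows "target p = path (p - 1) + int n"
proof -
  obtain t where t: "p = Suc t" "t < m" using assms unfolding last_exit_def by (cases p) auto
  have "prefix_prod rs m (path t) = prefix_prod rs p (path t)"
    using assms t prefix_prod_fixes_unvisited[of p m "path t"] unfolding last_exit_def by force
  moreover have "path t mod int n \<noteq> 0"
    using assms t path_m_mod unfolding last_exit_def by force
  ultimately show ?thesis
    using target_Suc t prefix_prod_m by (simp add: lambda_aff_def)
qed

lemma step_less_first_visit: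
  assumes "first_visit p"
  shows "path p - path (p - 1) < int n"
proof -
  obtain t where t: "p = Suc t" "t < m" using assms unfolding first_visit_def by (cases p) auto
  have "path p \<le> path t + int n"
    using target_first_visit[OF assms] target_Suc prefix_prod_le[of "Suc t" "path t"]
      path_Suc_mod_ne t by simp
  moreover have "path p \<noteq> path t + int n"
  proof
    assume "path p = path t + int n"
    then have "path p mod int n = path t mod int n" by simp
    then show False using path_Suc_mod_ne[OF t(2)] t(1) by metis
  qed
  ultimately show ?thesis using t by simp
qed

lemma target_revisit:
  assumes "s < p" "p \<le> m" "path s mod int n = path p mod int n"
    and "\<And>t. s < t \<Longrightarrow> t < p \<Longrightarrow> path t mod int n \<noteq> path p mod int n"
  shows "target p = target (Suc s) + (path p - path s)"
proof -
  have "Suc s \<noteq> p" using assms(1-3) path_Suc_mod_ne[of s] by auto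
  then have "Suc s \<le> p - 1" using assms(1) by simp
  then have "prefix_prod rs (p - 1) (path p) = prefix_prod rs (Suc s) (path p)"
  proof (rule prefix_prod_fixes_unvisited)
    show "p - 1 \<le> m" using assms by simp
    show "path p mod int n \<noteq> path i mod int n" if "Suc s \<le> i" "i \<le> p - 1" for i
    proof -
      have "i < p" using assms(1) that by linarith
      then show ?thesis using assms(4)[of i] that by auto
    qed
  qed
  then have "target p = prefix_prod rs (Suc s) (path p)" by (simp add: target_def)
  also have "\<dots> = prefix_prod rs s (path (Suc s) + (path p - path s))"
  proof -
    have "(rs ! s) (path p) = path (Suc s) + (path p - path s)"
      using assms rs_nth[of s] refl_aff_apply_left[of "path p" n "path s" "path (Suc s)"] by simp
    then show ?thesis using assms prefix_prod_Suc_rs[of s] by simp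
  qed
  also have "\<dots> = target (Suc s) + (path p - path s)"
  proof -
    obtain c where "path p = path s + int n * c" using assms(3) by (rule mod_eqE)
    then show ?thesis
      using periodic_perm_shift[OF periodic_perm_prefix_prod[of s], of "path (Suc s)" c]
      by (simp add: target_def mult.commute)
  qed
  finally show ?thesis .
qed

lemma residues_path: "(\<lambda>t. path t mod int n) ` {..m} = {0..<int n}"
proof
  show "(\<lambda>t. path t mod int n) ` {..m} \<subseteq> {0..<int n}" using n_pos by auto
  show "{0..<int n} \<subseteq> (\<lambda>t. path t mod int n) ` {..m}"
  proof
    fix k assume k: "k \<in> {0..<int n}"
    show "k \<in> (\<lambda>t. path t mod int n) ` {..m}"
    proof (cases "k = 0")
      case True
      then show ?thesis using path_0_mod by force
    next
      case False
      then have "k \<in> {1..<int n}" using k by auto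
      then have "cyc_cond k (nbr_list n a b k)" using cyc_cond_nbr_list by blast
      then have "nbr_list n a b k \<noteq> []" unfolding cyc_cond_def by auto
      then obtain i where i: "i \<in> {1..<2 * n - 1}" "modn n (a (i - 1)) = k"
        unfolding nbr_list_def by (auto simp: filter_empty_conv)
      then have "a (i - 1) mod int n = k" "i - 1 < m"
        using k False unfolding modn_def by (auto split: if_splits)
      then have "path (i - 1) mod int n = k" using path_mod_a by simp
      then show ?thesis using \<open>i - 1 < m\<close> by (intro image_eqI[of _ _ "i - 1"]) auto
    qed
  qed
qed

lemma card_first_visit: "card {p. first_visit p} = n - 1"
proof -
  let ?F = "{p. p \<le> m \<and> (\<forall>t<p. path t mod int n \<noteq> path p mod int n)}"
  have "{p. first_visit p} = ?F - {0}" unfolding first_visit_def by auto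
  moreover have "0 \<in> ?F" "finite ?F" by auto
  ultimately show ?thesis
    using card_first_occurrences[of m "\<lambda>t. path t mod int n"] residues_path by simp
qed

lemma card_last_exit: "card {p. last_exit p} = n - 1"
proof -
  let ?L = "{p. p \<le> m \<and> (\<forall>t. p < t \<and> t \<le> m \<longrightarrow> path t mod int n \<noteq> path p mod int n)}"
  have "{p. last_exit p} = Suc ` (?L - {m})"
  proof (intro equalityI subsetI)
    fix p assume "p \<in> {p. last_exit p}"
    then have "p = Suc (p - 1)" "p - 1 \<in> ?L - {m}" unfolding last_exit_def by auto
    then show "p \<in> Suc ` (?L - {m})" by (rule image_eqI)
  next
    fix p assume "p \<in> Suc ` (?L - {m})"
    then obtain q where "p = Suc q" "q \<in> ?L" "q \<noteq> m" by auto
    then show "p \<in> {p. last_exit p}" unfolding last_exit_def by auto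
  qed
  moreover have "m \<in> ?L" "finite ?L" by auto
  ultimately show ?thesis
    using card_last_occurrences[of m "\<lambda>t. path t mod int n"] residues_path
    by (simp add: card_image)
qed

lemma not_first_visit_and_last_exit: "\<not> (first_visit p \<and> last_exit p)"
proof
  assume both: "first_visit p \<and> last_exit p"
  then have "path p = path (p - 1) + int n"
    using target_first_visit[of p] target_last_exit[of p] by simp
  moreover have "p - 1 < m" "p = Suc (p - 1)" using both unfolding first_visit_def by auto
  ultimately show False using path_Suc_mod_ne[of "p - 1"] by (metis mod_add_self2)
qed

lemma first_visit_or_last_exit:
  assumes "1 \<le> p" "p \<le> m"
  shows "first_visit p \<or> last_exit p"
proof -
  have sub: "{p. first_visit p} \<union> {p. last_exit p} \<subseteq> {1..m}"
    unfolding first_visit_def last_exit_def by auto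
  then have "finite ({p. first_visit p} \<union> {p. last_exit p})"
    using finite_subset finite_atLeastAtMost by blast
  then have "finite {p. first_visit p}" "finite {p. last_exit p}" by auto
  then have "card ({p. first_visit p} \<union> {p. last_exit p})
      = card {p. first_visit p} + card {p. last_exit p}"
    using not_first_visit_and_last_exit by (intro card_Un_disjoint) auto
  also have "\<dots> = card {1..m}" using card_first_visit card_last_exit n by simp
  finally have "card ({p. first_visit p} \<union> {p. last_exit p}) = card {1..m}" .
  then have "{p. first_visit p} \<union> {p. last_exit p} = {1..m}"
    by (rule card_subset_eq[OF finite_atLeastAtMost sub])
  then have "p \<in> {p. first_visit p} \<union> {p. last_exit p}" using assms by simp
  then show ?thesis by simp
qed

lemma first_visit_1: "first_visit 1"
  unfolding first_visit_def using path_Suc_mod_ne[of 0] n by auto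

lemma last_exit_m: "last_exit m"
proof -
  have "\<not> first_visit m" unfolding first_visit_def using path_0_mod path_m_mod n by force
  then show ?thesis using first_visit_or_last_exit[of m] n by simp
qed

end

section \<open>The targets increase\<close>

context cyclic_factorization
begin

definition departures :: "int \<Rightarrow> nat list" where
  "departures k = filter (\<lambda>e. path (e - 1) mod int n = k) [1..<Suc m]"

lemma nbr_list_rotated:
  assumes k: "1 \<le> k" "k \<le> int n"
  shows "map (\<lambda>c. (c - k) mod int n) (nbr_list n a b k)
    = map (\<lambda>e. (path e - path (e - 1)) mod int n) (departures (k mod int n))"
proof -
  have range: "[1..<2 * n - 1] = [1..<Suc m]" using n by (simp add: Suc_diff_Suc numeral_2_eq_2)
  have "filter (\<lambda>e. modn n (a (e - 1)) = k) [1..<Suc m] = departures (k mod int n)"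
    unfolding departures_def
    by (rule filter_cong[OF refl]) (auto simp: modn_eq_iff[OF k] path_mod_a)
  then have "map (\<lambda>c. (c - k) mod int n) (nbr_list n a b k)
      = map (\<lambda>e. (modn n (b e) - k) mod int n) (departures (k mod int n))"
    unfolding nbr_list_def range by simp
  also have "\<dots> = map (\<lambda>e. (path e - path (e - 1)) mod int n) (departures (k mod int n))"
  proof (rule map_cong[OF refl])
    fix e assume "e \<in> set (departures (k mod int n))"
    then have e: "1 \<le> e" "e \<le> m" "path (e - 1) mod int n = k mod int n"
      unfolding departures_def by (auto simp del: upt_Suc)
    have "modn n (b e) mod int n = path e mod int n"
      using modn_mod[of n "b e"] path_Suc_mod_b[of "e - 1"] e by simp
    moreover have "k mod int n = path (e - 1) mod int n" using e by simp
    ultimately show "(modn n (b e) - k) mod int n = (path e - path (e - 1)) mod int n"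
      by (rule mod_diff_cong)
  qed
  finally show ?thesis .
qed

lemma nbr_list_bounds:
  assumes k: "1 \<le> k" "k \<le> int n" and c: "c \<in> set (nbr_list n a b k)"
  shows "1 \<le> c \<and> c \<le> int n \<and> c \<noteq> k"
proof -
  obtain e where e: "e \<in> {1..<2 * n - 1}" "modn n (a (e - 1)) = k" "c = modn n (b e)"
    using c unfolding nbr_list_def by auto
  then have "e - 1 < m" "e = Suc (e - 1)" by auto
  then have "a (e - 1) mod int n \<noteq> b e mod int n" using tree_like_nth by metis
  then show ?thesis using e modn_eq_iff[OF k] modn_bounds n by auto
qed

lemma sorted_departures_0:
  "sorted_wrt (<) (map (\<lambda>e. (path e - path (e - 1)) mod int n) (departures 0))"
proof -
  have "(c - int n) mod int n = c" if "c \<in> set (nbr_list n a b (int n))" for c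
    using nbr_list_bounds[OF _ order_refl that] n by (simp add: mod_diff_right_eq[symmetric])
  then have "map (\<lambda>c. (c - int n) mod int n) (nbr_list n a b (int n)) = nbr_list n a b (int n)"
    by (simp add: map_idI)
  then show ?thesis
    using nbr_list_rotated[of "int n"] sorted_nbr_list n by simp
qed

lemma sorted_butlast_departures:
  assumes k: "1 \<le> k" "k < int n"
  shows "sorted_wrt (<) (map (\<lambda>e. (path e - path (e - 1)) mod int n) (butlast (departures k)))"
proof -
  have "cyc_cond k (nbr_list n a b k)" using cyc_cond_nbr_list k by simp
  moreover have "1 \<le> c \<and> c \<le> int n \<and> c \<noteq> k" if "c \<in> set (nbr_list n a b k)" for c
    by (rule nbr_list_bounds) (use k that in auto)
  ultimately have "sorted_wrt (<) (map (\<lambda>c. (c - k) mod int n) (butlast (nbr_list n a b k)))"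
    using cyc_cond_sorted_rotated k by blast
  moreover have "k mod int n = k" using k by simp
  ultimately show ?thesis using nbr_list_rotated[of k] k by (simp only: map_butlast)
qed

lemma step_less_step:
  assumes first: "first_visit i" "first_visit i'" and "i < i'"
    and same: "path (i - 1) mod int n = path (i' - 1) mod int n" and not_last: "\<not> last_exit i'"
  shows "path i - path (i - 1) < path i' - path (i' - 1)"
proof -
  let ?K = "path (i - 1) mod int n"
  let ?g = "\<lambda>e. (path e - path (e - 1)) mod int n"
  have range: "1 \<le> i" "i' \<le> m" using first unfolding first_visit_def by auto
  have g: "?g e = path e - path (e - 1)" if "first_visit e" for e
  proof -
    have "e - 1 < e" "e \<le> m" using that unfolding first_visit_def by auto
    then have "path (e - 1) < path e" by (rule path_strict_mono)
    then show ?thesis using step_less_first_visit[OF that] by (intro mod_pos_pos_trivial) auto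
  qed
  have "?g i < ?g i'"
  proof (cases "?K = 0")
    case True
    then show ?thesis
      using sorted_wrt_map_filter_uptD[OF sorted_departures_0[unfolded departures_def]]
        same range \<open>i < i'\<close> by simp
  next
    case False
    obtain t where t: "i' \<le> t" "t \<le> m" "path t mod int n = ?K"
      using not_last range \<open>i < i'\<close> same unfolding last_exit_def by auto
    then have "t \<noteq> m" using path_m_mod False by auto
    have "0 \<le> ?K" "?K < int n" using n_pos by simp_all
    then have "1 \<le> ?K" "?K < int n" using False by simp_all
    then show ?thesis
      using sorted_wrt_map_butlast_filter_uptD[OF sorted_butlast_departures[unfolded departures_def],
          of ?K i i' "Suc t"] same range t \<open>i < i'\<close> \<open>t \<noteq> m\<close> by simp
  qed
  then show ?thesis using g first by simp
qed

lemma target_not_first_visit: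
  assumes p: "1 \<le> p" "p \<le> m" and "\<not> first_visit p"
  obtains s where "s < p" "path s mod int n = path p mod int n" "first_visit (Suc s)"
    "target p = path p + (path (Suc s) - path s)"
proof -
  define S where "S = {t. t < p \<and> path t mod int n = path p mod int n}"
  have "S \<noteq> {}" "finite S" using assms unfolding first_visit_def S_def by auto
  then have "Max S \<in> S" and max: "\<And>t. t \<in> S \<Longrightarrow> t \<le> Max S" by auto
  define s where "s = Max S"
  have s: "s < p" "path s mod int n = path p mod int n"
    using \<open>Max S \<in> S\<close> unfolding s_def S_def by auto
  have "target p = target (Suc s) + (path p - path s)"
  proof (rule target_revisit)
    show "s < p" "p \<le> m" "path s mod int n = path p mod int n" using s p by auto
    show "path t mod int n \<noteq> path p mod int n" if "s < t" "t < p" for t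
    proof
      assume "path t mod int n = path p mod int n"
      then have "t \<in> S" using that unfolding S_def by simp
      then show False using max that unfolding s_def by fastforce
    qed
  qed
  moreover have "first_visit (Suc s)"
  proof -
    have "\<not> last_exit (Suc s)"
    proof
      assume "last_exit (Suc s)"
      then have "\<forall>t. Suc s \<le> t \<and> t \<le> m \<longrightarrow> path t mod int n \<noteq> path s mod int n"
        unfolding last_exit_def by simp
      then show False using s p by (metis Suc_leI)
    qed
    then show ?thesis using first_visit_or_last_exit[of "Suc s"] s p by simp
  qed
  ultimately show thesis using that s target_first_visit by simp
qed

lemma target_less_Suc:
  assumes p: "1 \<le> p" "p < m"
  shows "target p < target (Suc p)"
proof -
  consider "first_visit p" "first_visit (Suc p)" | "first_visit p" "last_exit (Suc p)"
    | "last_exit p" "last_exit (Suc p)" | "\<not> first_visit p" "first_visit (Suc p)"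
    using first_visit_or_last_exit[of p] first_visit_or_last_exit[of "Suc p"] p by force
  then show ?thesis
  proof cases
    case 1
    then show ?thesis using target_first_visit path_less_Suc p by simp
  next
    case 2
    then show ?thesis using target_first_visit target_last_exit n by simp
  next
    case 3
    then show ?thesis using target_last_exit path_less_Suc[of "p - 1"] p by simp
  next
    case 4
    obtain s where s: "s < p" "path s mod int n = path p mod int n" "first_visit (Suc s)"
      "target p = path p + (path (Suc s) - path s)"
      using target_not_first_visit[OF p(1) _ 4(1)] p by auto
    have "path (Suc s) - path s < path (Suc p) - path p"
      using step_less_step[OF s(3) 4(2)] s not_first_visit_and_last_exit[of "Suc p"] 4 by simp
    then show ?thesis using s(4) target_first_visit[OF 4(2)] by simp
  qed
qed

lemma strict_mono_on_target: "strict_mono_on {1..m} target"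
proof (rule strict_mono_onI)
  fix p q assume "p \<in> {1..m}" "q \<in> {1..m}" "p < q"
  then show "target p < target q"
  proof (induction q)
    case (Suc q)
    then show ?case using target_less_Suc[of q] by (cases "p = q") auto
  qed simp
qed

lemma target_bounds:
  assumes "p \<in> {1..m}"
  shows "path 0 < target p" "target p < path 0 + int n * int n"
proof -
  have "target 1 \<le> target p" "target p \<le> target m"
    using strict_mono_on_less_eq[OF strict_mono_on_target] assms n by auto
  moreover have "target 1 = path 1" using target_first_visit first_visit_1 by simp
  moreover have "target m = path (m - 1) + int n" using target_last_exit last_exit_m by simp
  moreover have "path 0 < path 1" "path (m - 1) < path m"
    using path_strict_mono[of 0 1] path_strict_mono[of "m - 1" m] n by simp_all
  ultimately show "path 0 < target p" "target p < path 0 + int n * int n"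
    using path_m by (simp_all add: algebra_simps)
qed

lemma target_mod_nonzero:
  assumes "p \<in> {1..m}"
  shows "(target p - path 0) mod int n \<noteq> 0"
proof -
  have "(target p - path 0) mod int n = target p mod int n"
    using path_0_mod by (simp add: mod_diff_right_eq[symmetric])
  moreover have "target p mod int n \<noteq> 0"
  proof -
    consider "first_visit p" | "last_exit p" using first_visit_or_last_exit assms by auto
    then show ?thesis
    proof cases
      case 1
      then have "path 0 mod int n \<noteq> path p mod int n" unfolding first_visit_def by auto
      then show ?thesis using target_first_visit[OF 1] path_0_mod by simp
    next
      case 2
      then have "path m mod int n \<noteq> path (p - 1) mod int n" unfolding last_exit_def by auto
      then show ?thesis using target_last_exit[OF 2] path_m_mod by simp
    qed
  qed
  ultimately show ?thesis by simp
qed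

end

section \<open>The subword\<close>

lemma sigma_ne_id: "sigma n j \<noteq> id"
proof
  assume "sigma n j = id"
  then have "sigma n j (int ((j - 1) mod n)) = int ((j - 1) mod n)" by simp
  then show False by (simp add: sigma_def simple_refl_def refl_aff_apply_left)
qed

context cyclic_factorization
begin

abbreviation N :: nat where "N \<equiv> n * (n - 1)"

definition skip_pos :: "nat \<Rightarrow> nat" where
  "skip_pos p = nat (nonmult_index n (target p - path 0))"

definition skip_word :: "(int \<Rightarrow> int) list" where
  "skip_word = map (\<lambda>j. if j \<in> skip_pos ` {1..m} then id else sigma n j) [1..<N + 1]"

definition skips_upto :: "nat \<Rightarrow> nat" where
  "skips_upto j = card {p \<in> {1..m}. skip_pos p \<le> j}"

lemma skip_pos_bounds:
  assumes "p \<in> {1..m}"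
  shows "1 \<le> skip_pos p" "skip_pos p \<le> N" "nonmult n (int (skip_pos p)) = target p - path 0"
proof -
  have k: "(target p - path 0) mod int n \<noteq> 0" "0 < target p - path 0"
    "target p - path 0 < int n * int n"
    using target_mod_nonzero[OF assms] target_bounds[OF assms] by auto
  have idx: "int (skip_pos p) = nonmult_index n (target p - path 0)"
    using nonmult_index_bounds[OF n k] unfolding skip_pos_def by simp
  show "1 \<le> skip_pos p" using nonmult_index_bounds[OF n k] idx by simp
  have "int N = int n * (int n - 1)" using n by (simp add: of_nat_diff)
  then show "skip_pos p \<le> N" using nonmult_index_bounds[OF n k] idx by linarith
  show "nonmult n (int (skip_pos p)) = target p - path 0"
    using idx nonmult_nonmult_index[OF n k(1)] by simp
qed

lemma strict_mono_on_skip_pos: "strict_mono_on {1..m} skip_pos"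
proof (rule strict_mono_onI)
  fix p q assume pq: "p \<in> {1..m}" "q \<in> {1..m}" "p < q"
  then have "nonmult_index n (target p - path 0) < nonmult_index n (target q - path 0)"
    using strict_mono_onD[OF strict_mono_on_target] target_mod_nonzero
    by (intro nonmult_index_strict_mono[OF n]) auto
  then show "skip_pos p < skip_pos q"
    using skip_pos_bounds(3) pq nonmult_index_nonmult[OF n] by (metis of_nat_less_iff)
qed

lemma skips_upto_skip_pos:
  assumes p: "p \<in> {1..m}"
  shows "skips_upto (skip_pos p) = p" "skips_upto (skip_pos p - 1) = p - 1"
proof -
  have "{q \<in> {1..m}. skip_pos q \<le> skip_pos p} = {1..p}"
    using strict_mono_on_less_eq[OF strict_mono_on_skip_pos _ p] p by auto
  then show "skips_upto (skip_pos p) = p" unfolding skips_upto_def by simp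
  have "{q \<in> {1..m}. skip_pos q \<le> skip_pos p - 1} = {1..<p}"
    using strict_mono_on_less[OF strict_mono_on_skip_pos _ p] skip_pos_bounds(1)[OF p] p
    by fastforce
  then show "skips_upto (skip_pos p - 1) = p - 1" unfolding skips_upto_def by simp
qed

lemma skips_upto_Suc: "Suc j \<notin> skip_pos ` {1..m} \<Longrightarrow> skips_upto (Suc j) = skips_upto j"
  unfolding skips_upto_def by (metis (no_types, lifting) image_eqI le_Suc_eq)

lemma skips_upto_0: "skips_upto 0 = 0"
  using skip_pos_bounds(1) unfolding skips_upto_def by fastforce

lemma skips_upto_N: "skips_upto N = m"
proof -
  have "{p \<in> {1..m}. skip_pos p \<le> N} = {1..m}" using skip_pos_bounds(2) by auto
  then show ?thesis unfolding skips_upto_def by simp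
qed

lemma length_skip_word: "length skip_word = N"
  unfolding skip_word_def by (simp del: upt_Suc)

lemma bij_word_prefix: "bij (word_prefix n j)"
  using periodic_perm_word_prefix[OF n] periodic_perm_def by blast

lemma skip_word_nth:
  assumes "j < N"
  shows "skip_word ! j = (if Suc j \<in> skip_pos ` {1..m} then id else sigma n (Suc j))"
proof -
  have "[1..<N + 1] ! j = Suc j" using assms by (simp del: upt_Suc)
  then show ?thesis using assms unfolding skip_word_def by (simp del: upt_Suc)
qed

lemma word_prefix_Suc_at_skip:
  assumes t: "t < m" "skip_pos (Suc t) = Suc j"
    and prefix: "word_prefix n j = prefix_prod rs t \<circ> U"
  shows "word_prefix n (Suc j) = prefix_prod rs (Suc t) \<circ> U"
proof -
  have "nonmult n (int (Suc j)) = target (Suc t) - path 0"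
    using skip_pos_bounds(3)[of "Suc t"] t by simp
  then have sigma: "word_prefix n j \<circ> sigma n (Suc j) \<circ> inv (word_prefix n j)
      = refl_aff n 0 (target (Suc t) - path 0)"
    using word_prefix_conj_sigma[OF n, of "Suc j"] by simp
  have "word_prefix n (Suc j)
      = (word_prefix n j \<circ> sigma n (Suc j) \<circ> inv (word_prefix n j)) \<circ> word_prefix n j"
    using bij_word_prefix by (simp add: word_prefix_Suc comp_assoc bij_is_inj inv_o_cancel)
  also have "\<dots> = refl_aff n 0 (target (Suc t) - path 0) \<circ> word_prefix n j"
    unfolding sigma ..
  also have "\<dots> = (prefix_prod rs t \<circ> rs ! t \<circ> inv (prefix_prod rs t)) \<circ> (prefix_prod rs t \<circ> U)"
    unfolding conj_prefix_prod_rs_nth[OF t(1)] prefix ..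
  also have "\<dots> = prefix_prod rs (Suc t) \<circ> U"
    using bij_prefix_prod[of t] t(1) by (simp add: fun_eq_iff bij_is_inj prefix_prod_Suc_rs)
  finally show ?thesis .
qed

lemma word_prefix_eq_prefix_prods:
  "j \<le> N \<Longrightarrow> word_prefix n j = prefix_prod rs (skips_upto j) \<circ> prefix_prod skip_word j"
proof (induction j)
  case 0
  then show ?case by (simp add: word_prefix_def skips_upto_0)
next
  case (Suc j)
  then have j: "j < N" by simp
  have IH: "word_prefix n j = prefix_prod rs (skips_upto j) \<circ> prefix_prod skip_word j"
    by (rule Suc.IH) (use j in simp)
  have word: "prefix_prod skip_word (Suc j) = prefix_prod skip_word j \<circ> skip_word ! j"
    using prefix_prod_Suc length_skip_word j by simp
  show ?case
  proof (cases "Suc j \<in> skip_pos ` {1..m}")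
    case False
    then show ?thesis
      using IH word skip_word_nth[OF j] skips_upto_Suc
      by (simp add: word_prefix_Suc comp_assoc)
  next
    case True
    then obtain t where t: "t < m" "skip_pos (Suc t) = Suc j"
      by (auto simp: Suc_le_eq gr0_conv_Suc)
    then have "j = skip_pos (Suc t) - 1" by simp
    then have counts: "skips_upto j = t" "skips_upto (Suc j) = Suc t"
      using skips_upto_skip_pos[of "Suc t"] t by auto
    show ?thesis
      using word_prefix_Suc_at_skip[OF t] IH word skip_word_nth[OF j] True counts by simp
  qed
qed

lemma prod_skip_word: "prod_perms skip_word = id"
proof -
  have "lambda_aff n \<circ> prod_perms skip_word = lambda_aff n \<circ> id"
    using word_prefix_eq_prefix_prods[of N] word_prefix_full[OF n] skips_upto_N prefix_prod_m
      prefix_prod_length[of skip_word] length_skip_word by simp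
  moreover have "inj (lambda_aff n)"
    using bij_prefix_prod[of m] prefix_prod_m bij_is_inj by metis
  ultimately show ?thesis by (metis comp_apply id_apply inj_eq ext)
qed

lemma inv_t_skip_pos:
  assumes p: "p \<in> {1..m}"
  shows "inv_t n skip_word (skip_pos p) = rs ! (p - 1)"
proof -
  let ?j = "skip_pos p - 1"
  have "word_prefix n ?j = prefix_prod rs (p - 1) \<circ> prefix_prod skip_word ?j"
    using word_prefix_eq_prefix_prods[of ?j] skips_upto_skip_pos(2)[OF p] skip_pos_bounds(2)[OF p]
    by simp
  then have "inv_t n skip_word (skip_pos p)
      = inv (prefix_prod rs (p - 1))
        \<circ> (word_prefix n ?j \<circ> sigma n (skip_pos p) \<circ> inv (word_prefix n ?j))
        \<circ> prefix_prod rs (p - 1)"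
    unfolding inv_t_def by (rule conj_right_factor[OF bij_prefix_prod bij_word_prefix])
  also have "word_prefix n ?j \<circ> sigma n (skip_pos p) \<circ> inv (word_prefix n ?j)
      = prefix_prod rs (p - 1) \<circ> rs ! (p - 1) \<circ> inv (prefix_prod rs (p - 1))"
  proof -
    have "p - 1 < m" "Suc (p - 1) = p" using p by auto
    then show ?thesis
      using word_prefix_conj_sigma[OF n, of "skip_pos p"] skip_pos_bounds[OF p]
        conj_prefix_prod_rs_nth[of "p - 1"] by simp
  qed
  finally show ?thesis
    using bij_prefix_prod[of "p - 1"] by (simp add: fun_eq_iff bij_is_inj)
qed

lemma skips_skip_word: "skips n skip_word = map skip_pos [1..<m + 1]"
proof -
  have "skip_word ! (j - 1) = id \<longleftrightarrow> j \<in> skip_pos ` {1..m}" if "j \<in> set [1..<N + 1]" for j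
  proof -
    have "j - 1 < N" "Suc (j - 1) = j" using that by (auto simp del: upt_Suc)
    then show ?thesis using skip_word_nth[of "j - 1"] sigma_ne_id by simp
  qed
  then have "skips n skip_word = filter (\<lambda>j. j \<in> skip_pos ` {1..m}) [1..<N + 1]"
    unfolding skips_def by (intro filter_cong) auto
  also have "\<dots> = map skip_pos [1..<m + 1]"
  proof (rule sorted_distinct_set_unique)
    have "sorted_wrt (<) (map skip_pos [1..<m + 1])"
      unfolding sorted_wrt_map using strict_mono_onD[OF strict_mono_on_skip_pos]
      by (intro sorted_wrt_mono_rel[OF _ sorted_wrt_upt]) auto
    then show "sorted (map skip_pos [1..<m + 1])" "distinct (map skip_pos [1..<m + 1])"
      by (simp_all add: strict_sorted_iff)
    have "skip_pos ` {1..m} \<subseteq> {1..<N + 1}" using skip_pos_bounds(1,2) by fastforce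
    then have "set (filter (\<lambda>j. j \<in> skip_pos ` {1..m}) [1..<N + 1]) = skip_pos ` {1..m}"
      by (auto simp del: upt_Suc)
    also have "\<dots> = set (map skip_pos [1..<m + 1])" by (auto simp del: upt_Suc)
    finally show "set (filter (\<lambda>j. j \<in> skip_pos ` {1..m}) [1..<N + 1])
        = set (map skip_pos [1..<m + 1])" .
  qed (simp_all add: sorted_wrt_filter del: upt_Suc)
  finally show ?thesis .
qed

lemma skip_word_in_subwords_S: "skip_word \<in> subwords_S n"
  unfolding subwords_S_def
  using length_skip_word skip_word_nth skips_skip_word prod_skip_word
  by (auto simp del: upt_Suc)

lemma r_of_skip_word: "r_of n skip_word = rs"
proof -
  have "r_of n skip_word = map (\<lambda>p. rs ! (p - 1)) [1..<m + 1]"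
    unfolding r_of_def skips_skip_word map_map
    by (rule map_cong[OF refl]) (auto simp: inv_t_skip_pos simp del: upt_Suc)
  also have "\<dots> = map (\<lambda>i. rs ! i) [0..<length rs]"
    using length_rs by (simp add: map_Suc_upt[symmetric] del: upt_Suc)
  also have "\<dots> = rs" by (rule map_nth)
  finally show ?thesis .
qed

end

theorem proposition5p18:
  fixes n :: nat and rs :: "(int \<Rightarrow> int) list"
  assumes "n \<ge> 2"
    and "rs \<in> fact_lambda n"
    and "cyclic_fact n rs"
  shows "\<exists>u \<in> subwords_S n. rs = r_of n u"
proof -
  obtain a b where "tree_like_wit n rs a b" "sorted_wrt (<) (nbr_list n a b (int n))"
    "\<forall>k\<in>{1..<int n}. cyc_cond k (nbr_list n a b k)"
    using assms(3) unfolding cyclic_fact_def by blast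
  moreover have "prod_perms rs = lambda_aff n" using assms(2) unfolding fact_lambda_def by blast
  ultimately interpret cyclic_factorization n rs a b
    using assms(1) by unfold_locales
  show ?thesis using skip_word_in_subwords_S r_of_skip_word by metis
qed

end
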